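(* Let $H$ be a graph (possibly with loops) on $n$ vertices. Then for any integer $c\geq 2n$, the independence number of the exponential graph satisfies $\alpha(\mathcal{E}_c(H))\leq n c^{n-1}$.
   Context: For a finite graph $H$ (no multiple edges, loops allowed) and integer $c\ge 1$, two maps $\phi_1,\phi_2:V(H)\to[c]$ are co-proper if $\phi_1(u)\ne\phi_2(v)$ whenever $u\sim v$ in $H$. The exponential graph $\mathcal{E}_c(H)$ has vertex set $[c]^{V(H)}$, with $\phi_1\sim\phi_2$ iff they are co-proper. An independent set is a set of vertices no two distinct members of which are adjacent; $\alpha$ is the maximum size of an independent set. *)

theory Defs
  imports "HOL-Library.FuncSet"
begin

text \<open>A finite graph H (loops allowed, no multiple edges) is given by a finite vertex set V
and a symmetric adjacency relation E (E u u allowed = loop at u).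
Colour set [c] = {1..c}.\<close>

definition graph_on :: "'a set \<Rightarrow> ('a \<Rightarrow> 'a \<Rightarrow> bool) \<Rightarrow> bool" where
  "graph_on V E \<longleftrightarrow> finite V \<and> (\<forall>u v. E u v \<longrightarrow> u \<in> V \<and> v \<in> V) \<and> (\<forall>u v. E u v \<longrightarrow> E v u)"

definition exp_verts :: "'a set \<Rightarrow> nat \<Rightarrow> ('a \<Rightarrow> nat) set" where
  "exp_verts V c = (V \<rightarrow>\<^sub>E {1..c})"

definition co_proper :: "'a set \<Rightarrow> ('a \<Rightarrow> 'a \<Rightarrow> bool) \<Rightarrow> ('a \<Rightarrow> nat) \<Rightarrow> ('a \<Rightarrow> nat) \<Rightarrow> bool" where
  "co_proper V E \<phi>1 \<phi>2 \<longleftrightarrow> (\<forall>u\<in>V. \<forall>v\<in>V. E u v \<longrightarrow> \<phi>1 u \<noteq> \<phi>2 v)"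

definition exp_indep :: "'a set \<Rightarrow> ('a \<Rightarrow> 'a \<Rightarrow> bool) \<Rightarrow> nat \<Rightarrow> ('a \<Rightarrow> nat) set \<Rightarrow> bool" where
  "exp_indep V E c S \<longleftrightarrow> S \<subseteq> exp_verts V c \<and>
     (\<forall>\<phi>1\<in>S. \<forall>\<phi>2\<in>S. \<phi>1 \<noteq> \<phi>2 \<longrightarrow> \<not> co_proper V E \<phi>1 \<phi>2)"

definition exp_alpha :: "'a set \<Rightarrow> ('a \<Rightarrow> 'a \<Rightarrow> bool) \<Rightarrow> nat \<Rightarrow> nat" where
  "exp_alpha V E c = Max (card ` {S. exp_indep V E c S})"

end

theory Submission
  imports Defs
begin

(* Katona's cycle method. Two distinct members of an independent set of E_c(H) are not
   co-proper, so their images meet: the set is an intersecting family of maps V -> [c].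
   Fix k and consider the members whose image has exactly k colours. Enumerate the colours
   cyclically by a bijection sigma : Z_c -> [c] and map V onto {0, ..., k-1} by some psi.
   The c rotations of psi, relabelled by sigma, have as images the sigma-images of the c
   cyclic intervals of length k in Z_c, and for 2k <= c at most k of these intervals can
   pairwise meet. As sigma and psi vary, every map with k colours in its image is hit
   equally often, so at most a fraction k/c of those maps belong to the family; summing
   over k <= n gives alpha <= n c^(n-1). *)

lemma card_filter_eq_sum: "finite A \<Longrightarrow> card {x \<in> A. P x} = (\<Sum>x\<in>A. if P x then 1 else 0)"
  by (simp add: sum.inter_filter[symmetric])

lemma sum_card_filter_swap:
  assumes "finite A" "finite B"
  shows "(\<Sum>a\<in>A. card {b \<in> B. P a b}) = (\<Sum>b\<in>B. card {a \<in> A. P a b})"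
  using assms by (simp add: card_filter_eq_sum sum.swap[of _ A B])

lemma ex_bij_betw_image_eq:
  assumes "finite S" "A \<subseteq> S" "B \<subseteq> S" "card A = card B"
  shows "\<exists>\<pi>. bij_betw \<pi> S S \<and> \<pi> ` A = B"
proof -
  have "finite A" "finite B"
    using assms finite_subset by auto
  then obtain f where f: "bij_betw f A B"
    using \<open>card A = card B\<close> finite_same_card_bij by blast
  have "card (S - A) = card (S - B)"
    using assms \<open>finite A\<close> \<open>finite B\<close> by (simp add: card_Diff_subset)
  then obtain g where g: "bij_betw g (S - A) (S - B)"
    using assms(1) finite_same_card_bij by blast
  define \<pi> where "\<pi> x = (if x \<in> A then f x else g x)" for x
  have "bij_betw \<pi> A B"
    using f by (rule bij_betw_cong[THEN iffD1, rotated]) (simp add: \<pi>_def)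
  moreover have "bij_betw \<pi> (S - A) (S - B)"
    using g by (rule bij_betw_cong[THEN iffD1, rotated]) (simp add: \<pi>_def)
  ultimately have "bij_betw \<pi> (A \<union> (S - A)) (B \<union> (S - B))"
    by (rule bij_betw_combine) blast
  moreover have "A \<union> (S - A) = S" "B \<union> (S - B) = S"
    using assms by auto
  ultimately show ?thesis
    using \<open>bij_betw \<pi> A B\<close> by (auto simp: bij_betw_def)
qed

lemma mod_add_eq_cases:
  fixes i j x y c :: nat
  assumes "i < c" "j < c" "x < c" "y < c" and "(i + x) mod c = (j + y) mod c"
  shows "i + x = j + y \<or> i + x = j + y + c \<or> j + y = i + x + c"
  using assms by (cases "i + x < c"; cases "j + y < c") (simp_all add: le_mod_geq; linarith)+

lemma diff_mod_eq:
  fixes i j c :: nat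
  assumes "i < c" "j < c"
  shows "(j + c - i) mod c = (if i \<le> j then j - i else j + c - i)"
  using assms by (simp add: le_mod_geq)

lemma bij_betw_rotation:
  fixes j c :: nat
  assumes "j < c"
  shows "bij_betw (\<lambda>x. (x + j) mod c) {0..<c} {0..<c}"
proof -
  have "inj_on (\<lambda>x. (x + j) mod c) {0..<c}"
  proof
    fix x y assume "x \<in> {0..<c}" "y \<in> {0..<c}" "(x + j) mod c = (y + j) mod c"
    then show "x = y"
      using assms mod_add_eq_cases[of x c y j j] by auto
  qed
  moreover have "(\<lambda>x. (x + j) mod c) ` {0..<c} \<subseteq> {0..<c}"
    using assms by auto
  ultimately show ?thesis
    by (simp add: bij_betw_def endo_inj_surj)
qed

definition cyclic_interval :: "nat \<Rightarrow> nat \<Rightarrow> nat \<Rightarrow> nat set" where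
  "cyclic_interval c k i = (\<lambda>x. (x + i) mod c) ` {0..<k}"

lemma cyclic_intervals_meet_offset:
  fixes i j c k :: nat
  assumes "i < c" "j < c" "k \<le> c" and "cyclic_interval c k i \<inter> cyclic_interval c k j \<noteq> {}"
  shows "(j + c - i) mod c < k \<or> c - k < (j + c - i) mod c"
proof -
  obtain x y where "x < k" "y < k" "(i + x) mod c = (j + y) mod c"
    using assms(4) by (auto simp: cyclic_interval_def add.commute)
  with assms mod_add_eq_cases[of i c j x y] show ?thesis
    by (auto simp: diff_mod_eq)
qed

lemma card_le_if_cyclic_intervals_meet:
  fixes J :: "nat set" and c k :: nat
  assumes J: "J \<subseteq> {0..<c}" and "1 \<le> k" and "2 * k \<le> c"
    and meet: "\<And>i j. i \<in> J \<Longrightarrow> j \<in> J \<Longrightarrow> i \<noteq> j \<Longrightarrow>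
      cyclic_interval c k i \<inter> cyclic_interval c k j \<noteq> {}"
  shows "card J \<le> k"
proof (cases "J = {}")
  case False
  then obtain i0 where i0: "i0 \<in> J" by blast
  define d where "d j = (j + c - i0) mod c" for j
  \<comment> \<open>Every start lies within cyclic distance less than \<open>k\<close> of \<open>i0\<close>. Folding the starts
    behind \<open>i0\<close> forward by \<open>c - k\<close> is injective on \<open>J\<close>: two starts at cyclic distance
    \<open>c - k\<close> (hence \<open>k\<close> the other way round) carry disjoint intervals.\<close>
  define g where "g j = (if d j < k then d j else d j + k - c)" for j
  have less_c: "j < c" if "j \<in> J" for j
    using J that by auto
  have near: "d j < k \<or> c - k < d j" if "j \<in> J" for j
    using i0 that less_c assms(2,3) cyclic_intervals_meet_offset[OF less_c less_c _ meet]
    by (cases "j = i0") (auto simp: d_def)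
  have "inj_on g J"
  proof
    fix a b assume a: "a \<in> J" and b: "b \<in> J" and "g a = g b"
    show "a = b"
    proof (rule ccontr)
      assume "a \<noteq> b"
      then have "(b + c - a) mod c < k \<or> c - k < (b + c - a) mod c"
        using a b assms(3) by (intro cyclic_intervals_meet_offset less_c meet) auto
      then show False
        using near[OF a] near[OF b] \<open>g a = g b\<close> \<open>a \<noteq> b\<close> less_c[OF a] less_c[OF b] less_c[OF i0] assms(3)
        by (auto simp: g_def d_def diff_mod_eq split: if_splits)
    qed
  qed
  moreover have "g ` J \<subseteq> {0..<k}"
  proof (rule image_subsetI)
    fix j assume "j \<in> J"
    have "d j < c"
      using less_c[OF i0] by (simp add: d_def)
    then show "g j \<in> {0..<k}"
      using near[OF \<open>j \<in> J\<close>] assms(3) by (auto simp: g_def)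
  qed
  ultimately show ?thesis
    using card_inj_on_le[of g J "{0..<k}"] by simp
qed simp

definition relabel :: "'a set \<Rightarrow> (nat \<Rightarrow> nat) \<Rightarrow> ('a \<Rightarrow> nat) \<Rightarrow> 'a \<Rightarrow> nat" where
  "relabel V \<sigma> \<psi> = (\<lambda>v\<in>V. \<sigma> (\<psi> v))"

lemma image_relabel: "relabel V \<sigma> \<psi> ` V = \<sigma> ` \<psi> ` V"
  by (auto simp: relabel_def)

lemma relabel_relabel: "relabel V \<sigma> (relabel V \<tau> \<psi>) = relabel V (\<sigma> \<circ> \<tau>) \<psi>"
  unfolding relabel_def by (rule restrict_ext) simp

lemma relabel_cong:
  "(\<And>v. v \<in> V \<Longrightarrow> \<sigma> (\<psi> v) = \<tau> (\<psi> v)) \<Longrightarrow> relabel V \<sigma> \<psi> = relabel V \<tau> \<psi>"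
  unfolding relabel_def by (rule restrict_ext)

lemma relabel_in_PiE: "\<psi> \<in> V \<rightarrow>\<^sub>E A \<Longrightarrow> \<sigma> ` A \<subseteq> B \<Longrightarrow> relabel V \<sigma> \<psi> \<in> V \<rightarrow>\<^sub>E B"
  by (auto simp: relabel_def)

lemma relabel_inverse:
  assumes "\<psi> \<in> V \<rightarrow>\<^sub>E A" and "\<And>x. x \<in> A \<Longrightarrow> \<tau> (\<sigma> x) = x"
  shows "relabel V \<tau> (relabel V \<sigma> \<psi>) = \<psi>"
proof (rule extensionalityI[of _ V])
  show "relabel V \<tau> (relabel V \<sigma> \<psi>) \<in> extensional V" "\<psi> \<in> extensional V"
    using assms(1) by (simp_all add: relabel_def PiE_def)
next
  fix v assume "v \<in> V"
  then show "relabel V \<tau> (relabel V \<sigma> \<psi>) v = \<psi> v"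
    using assms by (auto simp: relabel_def)
qed

definition enumerations :: "nat \<Rightarrow> (nat \<Rightarrow> nat) set" where
  "enumerations c = {\<sigma> \<in> {0..<c} \<rightarrow>\<^sub>E {1..c}. bij_betw \<sigma> {0..<c} {1..c}}"

lemma finite_enumerations: "finite (enumerations c)"
  unfolding enumerations_def by (simp add: finite_PiE)

lemma enumerations_bij_betw: "\<sigma> \<in> enumerations c \<Longrightarrow> bij_betw \<sigma> {0..<c} {1..c}"
  by (simp add: enumerations_def)

lemma bij_betw_compose_enumerations:
  assumes \<pi>: "bij_betw \<pi> {1..c} {1..c}" and \<rho>: "bij_betw \<rho> {0..<c} {0..<c}"
  shows "bij_betw (\<lambda>\<sigma>. restrict (\<pi> \<circ> \<sigma> \<circ> \<rho>) {0..<c}) (enumerations c) (enumerations c)"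
proof -
  let ?h = "\<lambda>\<sigma>. restrict (\<pi> \<circ> \<sigma> \<circ> \<rho>) {0..<c}"
  have into: "?h ` enumerations c \<subseteq> enumerations c"
  proof (rule image_subsetI)
    fix \<sigma> assume "\<sigma> \<in> enumerations c"
    then have "bij_betw (\<pi> \<circ> \<sigma> \<circ> \<rho>) {0..<c} {1..c}"
      using \<pi> \<rho> by (blast intro: bij_betw_trans enumerations_bij_betw)
    then show "?h \<sigma> \<in> enumerations c"
      by (auto simp: enumerations_def bij_betw_def simp del: comp_apply)
  qed
  have "inj_on ?h (enumerations c)"
  proof
    fix \<sigma>1 \<sigma>2 assume \<sigma>1: "\<sigma>1 \<in> enumerations c" and \<sigma>2: "\<sigma>2 \<in> enumerations c"
      and eq: "?h \<sigma>1 = ?h \<sigma>2"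
    show "\<sigma>1 = \<sigma>2"
    proof (rule extensionalityI[of _ "{0..<c}"])
      show "\<sigma>1 \<in> extensional {0..<c}" "\<sigma>2 \<in> extensional {0..<c}"
        using \<sigma>1 \<sigma>2 by (auto simp: enumerations_def PiE_def)
    next
      fix x assume "x \<in> {0..<c}"
      then have "x \<in> \<rho> ` {0..<c}"
        using \<rho> by (simp add: bij_betw_def)
      then obtain y where "y \<in> {0..<c}" "x = \<rho> y"
        by blast
      then have "\<pi> (\<sigma>1 x) = \<pi> (\<sigma>2 x)"
        using fun_cong[OF eq, of y] by simp
      moreover have "\<sigma>1 x \<in> {1..c}" "\<sigma>2 x \<in> {1..c}"
        using \<sigma>1 \<sigma>2 \<open>x \<in> {0..<c}\<close> by (auto simp: enumerations_def)
      ultimately show "\<sigma>1 x = \<sigma>2 x"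
        using \<pi> by (meson bij_betw_imp_inj_on inj_onD)
    qed
  qed
  with into show ?thesis
    by (simp add: bij_betw_def endo_inj_surj finite_enumerations)
qed

definition enumerations_onto :: "nat \<Rightarrow> nat \<Rightarrow> nat set \<Rightarrow> (nat \<Rightarrow> nat) set" where
  "enumerations_onto c k A = {\<sigma> \<in> enumerations c. \<sigma> ` {0..<k} = A}"

lemma card_enumerations_onto_le:
  assumes "A \<subseteq> {1..c}" "B \<subseteq> {1..c}" "card A = card B" "k \<le> c"
  shows "card (enumerations_onto c k A) \<le> card (enumerations_onto c k B)"
proof -
  obtain \<pi> where \<pi>: "bij_betw \<pi> {1..c} {1..c}" "\<pi> ` A = B"
    using ex_bij_betw_image_eq[OF _ assms(1-3)] by auto
  let ?h = "\<lambda>\<sigma>. restrict (\<pi> \<circ> \<sigma> \<circ> id) {0..<c}"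
  have bij: "bij_betw ?h (enumerations c) (enumerations c)"
    using \<pi>(1) bij_betw_id by (rule bij_betw_compose_enumerations)
  have "?h ` enumerations_onto c k A \<subseteq> enumerations_onto c k B"
  proof (rule image_subsetI)
    fix \<sigma> assume "\<sigma> \<in> enumerations_onto c k A"
    then have \<sigma>: "\<sigma> \<in> enumerations c" "\<sigma> ` {0..<k} = A"
      by (simp_all add: enumerations_onto_def)
    have "?h \<sigma> ` {0..<k} = \<pi> ` \<sigma> ` {0..<k}"
      using \<open>k \<le> c\<close> by force
    with \<sigma> \<pi>(2) bij_betw_apply[OF bij] show "?h \<sigma> \<in> enumerations_onto c k B"
      by (simp add: enumerations_onto_def)
  qed
  moreover have "inj_on ?h (enumerations_onto c k A)"
    using bij by (auto simp: enumerations_onto_def bij_betw_def intro: inj_on_subset)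
  ultimately show ?thesis
    by (intro card_inj_on_le) (auto simp: enumerations_onto_def finite_enumerations)
qed

lemma card_enumerations_onto:
  assumes "A \<subseteq> {1..c}" "k \<le> c"
  shows "card (enumerations_onto c k A) = (if card A = k then card (enumerations_onto c k {1..k}) else 0)"
proof (cases "card A = k")
  case True
  have "{1..k} \<subseteq> {1..c}" "card {1..k} = k"
    using \<open>k \<le> c\<close> by auto
  with True assms show ?thesis
    using card_enumerations_onto_le[of A c "{1..k}" k] card_enumerations_onto_le[of "{1..k}" c A k]
    by simp
next
  case False
  have "enumerations_onto c k A = {}"
  proof (rule ccontr)
    assume "enumerations_onto c k A \<noteq> {}"
    then obtain \<sigma> where "\<sigma> \<in> enumerations c" "\<sigma> ` {0..<k} = A"
      by (auto simp: enumerations_onto_def)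
    moreover have "inj_on \<sigma> {0..<k}"
      using enumerations_bij_betw[OF \<open>\<sigma> \<in> enumerations c\<close>] \<open>k \<le> c\<close>
      by (auto simp: bij_betw_def intro: inj_on_subset)
    ultimately show False
      using False card_image by fastforce
  qed
  with False show ?thesis
    by simp
qed

lemma card_enumerations_onto_initial_pos:
  assumes "k \<le> c"
  shows "card (enumerations_onto c k {1..k}) > 0"
proof -
  have "bij_betw Suc {0..<c} {1..c}"
    by (simp add: bij_betw_def image_Suc_atLeastLessThan atLeastLessThanSuc_atLeastAtMost)
  then have "restrict Suc {0..<c} \<in> enumerations c"
    by (auto simp: enumerations_def)
  moreover have "restrict Suc {0..<c} ` {0..<k} = Suc ` {0..<k}"
    using assms by (intro image_cong) auto
  ultimately have "restrict Suc {0..<c} \<in> enumerations_onto c k {1..k}"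
    by (simp add: enumerations_onto_def image_Suc_atLeastLessThan atLeastLessThanSuc_atLeastAtMost)
  moreover have "finite (enumerations_onto c k {1..k})"
    by (simp add: enumerations_onto_def finite_enumerations)
  ultimately show ?thesis
    by (metis card_gt_0_iff empty_iff)
qed

definition maps_onto_initial :: "'a set \<Rightarrow> nat \<Rightarrow> ('a \<Rightarrow> nat) set" where
  "maps_onto_initial V k = {\<psi> \<in> V \<rightarrow>\<^sub>E {0..<k}. \<psi> ` V = {0..<k}}"

lemma finite_maps_onto_initial: "finite V \<Longrightarrow> finite (maps_onto_initial V k)"
  unfolding maps_onto_initial_def by (simp add: finite_PiE)

lemma card_relabel_preimage:
  assumes \<sigma>: "\<sigma> \<in> enumerations c" and F: "F \<subseteq> V \<rightarrow>\<^sub>E {1..c}" and "k \<le> c"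
  shows "card {\<psi> \<in> maps_onto_initial V k. relabel V \<sigma> \<psi> \<in> F}
       = card {\<phi> \<in> F. \<phi> ` V = \<sigma> ` {0..<k}}"
    (is "card ?A = card ?B")
proof (rule bij_betw_same_card)
  define \<tau> where "\<tau> = the_inv_into {0..<c} \<sigma>"
  have bij: "bij_betw \<sigma> {0..<c} {1..c}"
    using \<sigma> by (rule enumerations_bij_betw)
  have \<tau>\<sigma>: "\<tau> (\<sigma> x) = x" if "x \<in> {0..<k}" for x
    using bij that \<open>k \<le> c\<close> by (simp add: \<tau>_def bij_betw_def the_inv_into_f_f)
  have \<sigma>\<tau>: "\<sigma> (\<tau> y) = y" if "y \<in> {1..c}" for y
    using bij that by (simp add: \<tau>_def f_the_inv_into_f_bij_betw)
  show "bij_betw (relabel V \<sigma>) ?A ?B"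
  proof (rule bij_betw_byWitness[where f' = "relabel V \<tau>"])
    show "\<forall>\<psi>\<in>?A. relabel V \<tau> (relabel V \<sigma> \<psi>) = \<psi>"
      using \<tau>\<sigma> by (auto simp: maps_onto_initial_def intro: relabel_inverse[where A = "{0..<k}"])
    have \<sigma>\<tau>_F: "relabel V \<sigma> (relabel V \<tau> \<phi>) = \<phi>" if "\<phi> \<in> F" for \<phi>
      using F that by (blast intro: relabel_inverse \<sigma>\<tau>)
    then show "\<forall>\<phi>\<in>?B. relabel V \<sigma> (relabel V \<tau> \<phi>) = \<phi>"
      by blast
    show "relabel V \<sigma> ` ?A \<subseteq> ?B"
      by (rule image_subsetI) (simp add: maps_onto_initial_def image_relabel)
    show "relabel V \<tau> ` ?B \<subseteq> ?A"
    proof (rule image_subsetI)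
      fix \<phi> assume \<phi>: "\<phi> \<in> ?B"
      have "\<tau> ` \<sigma> ` {0..<k} = {0..<k}"
        using \<tau>\<sigma> by force
      then have "relabel V \<tau> \<phi> ` V = {0..<k}"
        using \<phi> by (simp add: image_relabel)
      moreover have "relabel V \<tau> \<phi> \<in> extensional V"
        by (simp add: relabel_def)
      ultimately show "relabel V \<tau> \<phi> \<in> ?A"
        using \<phi> \<sigma>\<tau>_F by (auto simp: maps_onto_initial_def PiE_iff)
    qed
  qed
qed

lemma sum_card_relabel_preimage:
  assumes F: "F \<subseteq> V \<rightarrow>\<^sub>E {1..c}" and "finite F" and "k \<le> c"
  shows "(\<Sum>\<sigma>\<in>enumerations c. card {\<psi> \<in> maps_onto_initial V k. relabel V \<sigma> \<psi> \<in> F})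
       = card (enumerations_onto c k {1..k}) * card {\<phi> \<in> F. card (\<phi> ` V) = k}"
proof -
  have "(\<Sum>\<sigma>\<in>enumerations c. card {\<psi> \<in> maps_onto_initial V k. relabel V \<sigma> \<psi> \<in> F})
      = (\<Sum>\<sigma>\<in>enumerations c. card {\<phi> \<in> F. \<phi> ` V = \<sigma> ` {0..<k}})"
    using card_relabel_preimage[OF _ F \<open>k \<le> c\<close>] by simp
  also have "\<dots> = (\<Sum>\<phi>\<in>F. card {\<sigma> \<in> enumerations c. \<phi> ` V = \<sigma> ` {0..<k}})"
    by (rule sum_card_filter_swap[OF finite_enumerations \<open>finite F\<close>])
  also have "\<dots> = (\<Sum>\<phi>\<in>F. if card (\<phi> ` V) = k then card (enumerations_onto c k {1..k}) else 0)"
  proof (rule sum.cong[OF refl])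
    fix \<phi> assume "\<phi> \<in> F"
    then have "\<phi> ` V \<subseteq> {1..c}"
      using F by auto
    moreover have "{\<sigma> \<in> enumerations c. \<phi> ` V = \<sigma> ` {0..<k}} = enumerations_onto c k (\<phi> ` V)"
      by (auto simp: enumerations_onto_def)
    ultimately show "card {\<sigma> \<in> enumerations c. \<phi> ` V = \<sigma> ` {0..<k}}
        = (if card (\<phi> ` V) = k then card (enumerations_onto c k {1..k}) else 0)"
      using card_enumerations_onto \<open>k \<le> c\<close> by simp
  qed
  also have "\<dots> = card (enumerations_onto c k {1..k}) * card {\<phi> \<in> F. card (\<phi> ` V) = k}"
    using \<open>finite F\<close> by (simp add: card_filter_eq_sum sum_distrib_left if_distrib cong: if_cong)
  finally show ?thesis .
qed

lemma sum_card_relabel_rotations: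
  assumes R: "R \<subseteq> V \<rightarrow>\<^sub>E {0..<c}" and "finite R"
  shows "(\<Sum>\<sigma>\<in>enumerations c. \<Sum>\<psi>\<in>R.
            card {j \<in> {0..<c}. relabel V \<sigma> (relabel V (\<lambda>x. (x + j) mod c) \<psi>) \<in> F})
       = c * (\<Sum>\<sigma>\<in>enumerations c. card {\<psi> \<in> R. relabel V \<sigma> \<psi> \<in> F})"
proof -
  let ?I = "\<lambda>\<sigma> \<psi>. if relabel V \<sigma> \<psi> \<in> F then 1 else 0 :: nat"
  \<comment> \<open>Rotating \<open>\<psi>\<close> amounts to precomposing \<open>\<sigma>\<close> with a rotation,
    which permutes the enumerations.\<close>
  have rotation_invariant: "(\<Sum>\<sigma>\<in>enumerations c. \<Sum>\<psi>\<in>R. ?I \<sigma> (relabel V (\<lambda>x. (x + j) mod c) \<psi>))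
      = (\<Sum>\<sigma>\<in>enumerations c. \<Sum>\<psi>\<in>R. ?I \<sigma> \<psi>)" if "j < c" for j
  proof -
    let ?h = "\<lambda>\<sigma>. restrict (id \<circ> \<sigma> \<circ> (\<lambda>x. (x + j) mod c)) {0..<c}"
    have "relabel V \<sigma> (relabel V (\<lambda>x. (x + j) mod c) \<psi>) = relabel V (?h \<sigma>) \<psi>" if "\<psi> \<in> R" for \<sigma> \<psi>
      using R that \<open>j < c\<close> by (auto simp: relabel_relabel PiE_iff intro!: relabel_cong)
    then have "(\<Sum>\<sigma>\<in>enumerations c. \<Sum>\<psi>\<in>R. ?I \<sigma> (relabel V (\<lambda>x. (x + j) mod c) \<psi>))
        = (\<Sum>\<sigma>\<in>enumerations c. \<Sum>\<psi>\<in>R. ?I (?h \<sigma>) \<psi>)"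
      by simp
    also have "\<dots> = (\<Sum>\<sigma>\<in>enumerations c. \<Sum>\<psi>\<in>R. ?I \<sigma> \<psi>)"
      using bij_betw_compose_enumerations[OF bij_betw_id bij_betw_rotation[OF \<open>j < c\<close>]]
      by (rule sum.reindex_bij_betw)
    finally show ?thesis .
  qed
  have "(\<Sum>\<sigma>\<in>enumerations c. \<Sum>\<psi>\<in>R.
            card {j \<in> {0..<c}. relabel V \<sigma> (relabel V (\<lambda>x. (x + j) mod c) \<psi>) \<in> F})
      = (\<Sum>\<sigma>\<in>enumerations c. \<Sum>\<psi>\<in>R. \<Sum>j\<in>{0..<c}. ?I \<sigma> (relabel V (\<lambda>x. (x + j) mod c) \<psi>))"
    by (intro sum.cong refl card_filter_eq_sum) simp
  also have "\<dots> = (\<Sum>j\<in>{0..<c}. \<Sum>\<sigma>\<in>enumerations c. \<Sum>\<psi>\<in>R. ?I \<sigma> (relabel V (\<lambda>x. (x + j) mod c) \<psi>))"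
    by (subst sum.swap) (simp add: sum.swap[of _ R])
  also have "\<dots> = (\<Sum>j\<in>{0..<c}. \<Sum>\<sigma>\<in>enumerations c. \<Sum>\<psi>\<in>R. ?I \<sigma> \<psi>)"
    using rotation_invariant by simp
  also have "\<dots> = c * (\<Sum>\<sigma>\<in>enumerations c. card {\<psi> \<in> R. relabel V \<sigma> \<psi> \<in> F})"
    using \<open>finite R\<close> by (simp add: card_filter_eq_sum)
  finally show ?thesis .
qed

definition intersecting :: "'a set \<Rightarrow> ('a \<Rightarrow> nat) set \<Rightarrow> bool" where
  "intersecting V F \<longleftrightarrow> (\<forall>\<phi>1\<in>F. \<forall>\<phi>2\<in>F. \<phi>1 \<noteq> \<phi>2 \<longrightarrow> \<phi>1 ` V \<inter> \<phi>2 ` V \<noteq> {})"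

lemma card_rotations_in_intersecting_le:
  assumes \<sigma>: "\<sigma> \<in> enumerations c" and \<psi>: "\<psi> \<in> maps_onto_initial V k" and "V \<noteq> {}"
    and "1 \<le> k" "2 * k \<le> c" and F: "intersecting V F"
  shows "card {j \<in> {0..<c}. relabel V \<sigma> (relabel V (\<lambda>x. (x + j) mod c) \<psi>) \<in> F} \<le> k"
proof (rule card_le_if_cyclic_intervals_meet[OF _ \<open>1 \<le> k\<close> \<open>2 * k \<le> c\<close>])
  let ?\<phi> = "\<lambda>j. relabel V \<sigma> (relabel V (\<lambda>x. (x + j) mod c) \<psi>)"
  show "{j \<in> {0..<c}. ?\<phi> j \<in> F} \<subseteq> {0..<c}"
    by blast
  fix i j assume i: "i \<in> {j \<in> {0..<c}. ?\<phi> j \<in> F}" and j: "j \<in> {j \<in> {0..<c}. ?\<phi> j \<in> F}"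
    and "i \<noteq> j"
  have "c > 0" "k \<le> c"
    using \<open>1 \<le> k\<close> \<open>2 * k \<le> c\<close> by auto
  have inj: "inj_on \<sigma> {0..<c}"
    using enumerations_bij_betw[OF \<sigma>] by (rule bij_betw_imp_inj_on)
  obtain v where "v \<in> V"
    using \<open>V \<noteq> {}\<close> by blast
  have eval: "?\<phi> l v = \<sigma> ((\<psi> v + l) mod c)" for l
    using \<open>v \<in> V\<close> by (simp add: relabel_def)
  have "\<psi> v \<in> \<psi> ` V"
    using \<open>v \<in> V\<close> by (rule imageI)
  then have "\<psi> v < c"
    using \<psi> \<open>k \<le> c\<close> by (auto simp: maps_onto_initial_def)
  have "?\<phi> i \<noteq> ?\<phi> j"
  proof
    assume "?\<phi> i = ?\<phi> j"
    then have "\<sigma> ((\<psi> v + i) mod c) = \<sigma> ((\<psi> v + j) mod c)"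
      by (metis eval)
    then have "(\<psi> v + i) mod c = (\<psi> v + j) mod c"
      using inj \<open>c > 0\<close> by (simp add: inj_on_eq_iff)
    then show False
      using mod_add_eq_cases[of "\<psi> v" c "\<psi> v" i j] \<open>\<psi> v < c\<close> i j \<open>i \<noteq> j\<close> by auto
  qed
  then have "?\<phi> i ` V \<inter> ?\<phi> j ` V \<noteq> {}"
    using F i j by (auto simp: intersecting_def)
  moreover have "?\<phi> l ` V = \<sigma> ` cyclic_interval c k l" for l
    using \<psi> by (simp add: image_relabel maps_onto_initial_def cyclic_interval_def image_image)
  moreover have "cyclic_interval c k l \<subseteq> {0..<c}" for l
    using \<open>c > 0\<close> by (auto simp: cyclic_interval_def)
  ultimately show "cyclic_interval c k i \<inter> cyclic_interval c k j \<noteq> {}"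
    using inj by (simp add: inj_on_image_Int[symmetric])
qed

lemma card_intersecting_image_card_le:
  assumes F: "F \<subseteq> V \<rightarrow>\<^sub>E {1..c}" and "finite V" "V \<noteq> {}" and "intersecting V F"
    and "1 \<le> k" "2 * k \<le> c"
  shows "c * card {\<phi> \<in> F. card (\<phi> ` V) = k} \<le> k * card {\<phi> \<in> V \<rightarrow>\<^sub>E {1..c}. card (\<phi> ` V) = k}"
proof -
  let ?M = "V \<rightarrow>\<^sub>E {1..c}"
  let ?R = "maps_onto_initial V k"
  let ?D = "card (enumerations_onto c k {1..k})"
  have "k \<le> c"
    using \<open>2 * k \<le> c\<close> by simp
  have "finite ?M"
    using \<open>finite V\<close> by (simp add: finite_PiE)
  then have "finite F"
    using F finite_subset by blast
  have "V \<rightarrow>\<^sub>E {0..<k} \<subseteq> V \<rightarrow>\<^sub>E {0..<c}"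
    using \<open>k \<le> c\<close> by (intro PiE_mono) auto
  then have R: "?R \<subseteq> V \<rightarrow>\<^sub>E {0..<c}"
    by (auto simp: maps_onto_initial_def)
  have "c * (?D * card {\<phi> \<in> F. card (\<phi> ` V) = k})
      = c * (\<Sum>\<sigma>\<in>enumerations c. card {\<psi> \<in> ?R. relabel V \<sigma> \<psi> \<in> F})"
    by (simp only: sum_card_relabel_preimage[OF F \<open>finite F\<close> \<open>k \<le> c\<close>])
  also have "\<dots> = (\<Sum>\<sigma>\<in>enumerations c. \<Sum>\<psi>\<in>?R.
      card {j \<in> {0..<c}. relabel V \<sigma> (relabel V (\<lambda>x. (x + j) mod c) \<psi>) \<in> F})"
    by (rule sum_card_relabel_rotations[OF R finite_maps_onto_initial[OF \<open>finite V\<close>], symmetric])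
  also have "\<dots> \<le> (\<Sum>\<sigma>\<in>enumerations c. \<Sum>\<psi>\<in>?R. k)"
  proof (intro sum_mono)
    fix \<sigma> \<psi> assume "\<sigma> \<in> enumerations c" "\<psi> \<in> ?R"
    then show "card {j \<in> {0..<c}. relabel V \<sigma> (relabel V (\<lambda>x. (x + j) mod c) \<psi>) \<in> F} \<le> k"
      by (rule card_rotations_in_intersecting_le[OF _ _ assms(3,5,6,4)])
  qed
  also have "\<dots> = k * (\<Sum>\<sigma>\<in>enumerations c. card {\<psi> \<in> ?R. relabel V \<sigma> \<psi> \<in> ?M})"
  proof -
    have "{\<psi> \<in> ?R. relabel V \<sigma> \<psi> \<in> ?M} = ?R" if "\<sigma> \<in> enumerations c" for \<sigma>
    proof -
      have "\<sigma> ` {0..<k} \<subseteq> {1..c}"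
        using enumerations_bij_betw[OF that] \<open>k \<le> c\<close> by (auto simp: bij_betw_def)
      have "relabel V \<sigma> \<psi> \<in> ?M" if "\<psi> \<in> ?R" for \<psi>
      proof (rule relabel_in_PiE)
        show "\<psi> \<in> V \<rightarrow>\<^sub>E {0..<k}"
          using that by (simp add: maps_onto_initial_def)
      qed fact
      then show ?thesis
        by blast
    qed
    then show ?thesis
      by (simp add: sum_distrib_left)
  qed
  also have "\<dots> = k * (?D * card {\<phi> \<in> ?M. card (\<phi> ` V) = k})"
    by (simp only: sum_card_relabel_preimage[OF subset_refl \<open>finite ?M\<close> \<open>k \<le> c\<close>])
  finally have "?D * (c * card {\<phi> \<in> F. card (\<phi> ` V) = k}) \<le> ?D * (k * card {\<phi> \<in> ?M. card (\<phi> ` V) = k})"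
    by (simp only: mult.left_commute)
  then show ?thesis
    using card_enumerations_onto_initial_pos[OF \<open>k \<le> c\<close>] nat_mult_le_cancel1 by blast
qed

lemma card_eq_sum_card_image_card:
  assumes "finite G" "finite V" "V \<noteq> {}"
  shows "card G = (\<Sum>k\<in>{1..card V}. card {\<phi> \<in> G. card (\<phi> ` V) = k})"
proof -
  have "(\<Sum>k\<in>{1..card V}. card {\<phi> \<in> G. card (\<phi> ` V) = k})
      = (\<Sum>k\<in>{1..card V}. \<Sum>\<phi>\<in>G. if card (\<phi> ` V) = k then 1 else 0)"
    using \<open>finite G\<close> by (intro sum.cong refl card_filter_eq_sum)
  also have "\<dots> = (\<Sum>\<phi>\<in>G. \<Sum>k\<in>{1..card V}. if card (\<phi> ` V) = k then 1 else 0)"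
    by (rule sum.swap)
  also have "\<dots> = (\<Sum>\<phi>\<in>G. 1)"
  proof (rule sum.cong[OF refl])
    fix \<phi> assume "\<phi> \<in> G"
    have "card (\<phi> ` V) \<in> {1..card V}"
      using assms(2,3) card_image_le[OF \<open>finite V\<close>] by (simp add: Suc_le_eq card_gt_0_iff)
    then show "(\<Sum>k\<in>{1..card V}. if card (\<phi> ` V) = k then 1 else 0) = (1::nat)"
      by simp
  qed
  finally show ?thesis
    by simp
qed

lemma card_intersecting_le:
  assumes F: "F \<subseteq> V \<rightarrow>\<^sub>E {1..c}" and "finite V" "card V = n" "1 \<le> n" "2 * n \<le> c"
    and "intersecting V F"
  shows "card F \<le> n * c ^ (n - 1)"
proof -
  let ?M = "V \<rightarrow>\<^sub>E {1..c}"
  have "V \<noteq> {}"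
    using assms(3,4) by auto
  have "finite ?M"
    using \<open>finite V\<close> by (simp add: finite_PiE)
  then have "finite F"
    using F finite_subset by blast
  have "c * card F = (\<Sum>k\<in>{1..n}. c * card {\<phi> \<in> F. card (\<phi> ` V) = k})"
    using card_eq_sum_card_image_card[OF \<open>finite F\<close> \<open>finite V\<close> \<open>V \<noteq> {}\<close>] assms(3)
    by (simp add: sum_distrib_left)
  also have "\<dots> \<le> (\<Sum>k\<in>{1..n}. k * card {\<phi> \<in> ?M. card (\<phi> ` V) = k})"
    using card_intersecting_image_card_le[OF F \<open>finite V\<close> \<open>V \<noteq> {}\<close> \<open>intersecting V F\<close>] assms(5)
    by (intro sum_mono) simp
  also have "\<dots> \<le> (\<Sum>k\<in>{1..n}. n * card {\<phi> \<in> ?M. card (\<phi> ` V) = k})"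
    by (intro sum_mono) simp
  also have "\<dots> = n * card ?M"
    using card_eq_sum_card_image_card[OF \<open>finite ?M\<close> \<open>finite V\<close> \<open>V \<noteq> {}\<close>] assms(3)
    by (simp add: sum_distrib_left)
  also have "\<dots> = n * c ^ n"
    using assms(3) \<open>finite V\<close> by (simp add: card_PiE)
  also have "\<dots> = c * (n * c ^ (n - 1))"
    using assms(4) by (cases n) (simp_all add: algebra_simps)
  finally show ?thesis
    using assms(4,5) by simp
qed

lemma independent_imp_intersecting:
  assumes "exp_indep V E c S"
  shows "intersecting V S"
  unfolding intersecting_def
proof (intro ballI impI)
  fix \<phi>1 \<phi>2 assume "\<phi>1 \<in> S" "\<phi>2 \<in> S" "\<phi>1 \<noteq> \<phi>2"
  then have "\<not> co_proper V E \<phi>1 \<phi>2"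
    using assms by (simp add: exp_indep_def)
  then obtain u v where "u \<in> V" "v \<in> V" "\<phi>1 u = \<phi>2 v"
    unfolding co_proper_def by blast
  then show "\<phi>1 ` V \<inter> \<phi>2 ` V \<noteq> {}"
    by blast
qed

theorem lemma4:
  fixes V :: "'a set" and E :: "'a \<Rightarrow> 'a \<Rightarrow> bool" and n c :: nat
  assumes "graph_on V E" and "card V = n" and "n \<ge> 1" and "c \<ge> 2 * n"
  shows "exp_alpha V E c \<le> n * c ^ (n - 1)"
proof -
  have "finite V"
    using assms(1) by (simp add: graph_on_def)
  have bound: "card S \<le> n * c ^ (n - 1)" if "exp_indep V E c S" for S
  proof (rule card_intersecting_le[OF _ \<open>finite V\<close> assms(2-4)])
    show "S \<subseteq> V \<rightarrow>\<^sub>E {1..c}"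
      using that by (simp add: exp_indep_def exp_verts_def)
    show "intersecting V S"
      using that by (rule independent_imp_intersecting)
  qed
  have "{S. exp_indep V E c S} \<subseteq> Pow (exp_verts V c)"
    by (auto simp: exp_indep_def)
  moreover have "finite (exp_verts V c)"
    using \<open>finite V\<close> by (simp add: exp_verts_def finite_PiE)
  ultimately have "finite (card ` {S. exp_indep V E c S})"
    by (meson finite_Pow_iff finite_imageI finite_subset)
  moreover have "exp_indep V E c {}"
    by (simp add: exp_indep_def)
  ultimately show ?thesis
    unfolding exp_alpha_def using bound by (intro Max.boundedI) blast+
qed

end
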